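(* Let $n$ be a positive integer and let $\lambda$ and $\mu$ be integer partitions of $n$. Then $\mathrm{pre}_2(\lambda) = \mathrm{pre}_2(\mu)$ if and only if $\lambda = \mu$.
   Context: An integer partition $\lambda = (\lambda_1, \dots, \lambda_\ell)$ of a positive integer $n$ is a weakly decreasing finite sequence of positive integers whose sum is $n$; the $\lambda_i$ are its parts and $\ell(\lambda)=\ell$ is its length. For a partition $\lambda = (\lambda_1,\dots,\lambda_\ell)$, $\mathrm{pre}_2(\lambda)$ denotes the partition whose multiset of parts is the multiset $\{\!\{\lambda_i\lambda_j : 1 \le i < j \le \ell\}\!\}$ (with multiplicities, arranged in weakly decreasing order); if $\ell < 2$ it is the empty partition. *)

theory Defs
  imports Main "HOL-Library.Multiset"
begin

definition is_partition :: "nat \<Rightarrow> nat list \<Rightarrow> bool" where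
  "is_partition n lam \<longleftrightarrow> sorted_wrt (\<ge>) lam \<and> (\<forall>x\<in>set lam. 0 < x) \<and> sum_list lam = n"

definition pre2_mset :: "nat list \<Rightarrow> nat multiset" where
  "pre2_mset lam = mset [lam ! i * lam ! j. i \<leftarrow> [0..<length lam], j \<leftarrow> [Suc i..<length lam]]"

definition pre2 :: "nat list \<Rightarrow> nat list" where
  "pre2 lam = rev (sorted_list_of_multiset (pre2_mset lam))"

end

theory Submission
  imports Defs "HOL-Library.Infinite_Set"
begin

text \<open>Write \<open>p\<^sub>k(A)\<close> for the sum of the \<open>k\<close>-th powers of the elements of a multiset \<open>A\<close>.
  Expanding the square of \<open>p\<^sub>k(\<lambda>) = \<lambda>\<^sub>1\<^sup>k + \<dots> + \<lambda>\<^sub>\<ell>\<^sup>k\<close> gives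
  \<open>p\<^sub>k(\<lambda>)\<^sup>2 = p\<^sub>2\<^sub>k(\<lambda>) + 2 p\<^sub>k(pre\<^sub>2(\<lambda>))\<close>, so \<open>pre\<^sub>2(\<lambda>)\<close> together with \<open>p\<^sub>1(\<lambda>) = n\<close>
  determines \<open>p\<^sub>k(\<lambda>)\<close> for every power of two \<open>k\<close>. Power sums along any unbounded
  set of exponents determine a multiset of positive integers: for large \<open>k\<close> the
  largest element \<open>a\<close> dominates, which forces its multiplicity, and one removes it
  and recurses.\<close>

lemma pre2_mset_Cons: "pre2_mset (x # xs) = image_mset ((*) x) (mset xs) + pre2_mset xs"
proof -
  have upt_0_Suc: "[0..<Suc l] = 0 # map Suc [0..<l]" for l
    by (simp add: upt_conv_Cons map_Suc_upt)
  have upt_Suc_Suc: "[Suc i..<Suc l] = map Suc [i..<l]" for i l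
    by (simp add: map_Suc_upt)
  have "map (\<lambda>j. x * xs ! j) [0..<length xs] = map ((*) x) xs"
    by (rule nth_equalityI) auto
  then show ?thesis
    unfolding pre2_mset_def
    by (simp only: length_Cons upt_0_Suc upt_Suc_Suc list.map concat.simps map_map comp_def
        nth_Cons_Suc nth_Cons_0) (simp add: upt_Suc_Suc[symmetric])
qed

lemma pre2_eq_iff_pre2_mset_eq: "pre2 xs = pre2 ys \<longleftrightarrow> pre2_mset xs = pre2_mset ys"
  unfolding pre2_def by (metis mset_sorted_list_of_multiset rev_rev_ident)

lemma sorted_wrt_ge_eq_if_mset_eq:
  fixes xs ys :: "'a::linorder list"
  assumes "sorted_wrt (\<ge>) xs" "sorted_wrt (\<ge>) ys" "mset xs = mset ys"
  shows "xs = ys"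
proof -
  have sorted_rev: "sorted (rev xs)" "sorted (rev ys)"
    using assms(1,2) by (simp_all add: sorted_wrt_rev)
  have "rev xs = sort (rev ys)"
    using assms(3) sorted_rev(1) by (intro properties_for_sort[symmetric]) simp_all
  also have "\<dots> = rev ys"
    using sorted_rev(2) by (rule sorted_sort_id)
  finally show ?thesis by simp
qed

definition power_sum :: "nat \<Rightarrow> nat multiset \<Rightarrow> nat" where
  "power_sum k A = (\<Sum>x\<in>#A. x ^ k)"

lemma power_sum_square:
  "power_sum k (mset xs) ^ 2 = power_sum (2 * k) (mset xs) + 2 * power_sum k (pre2_mset xs)"
proof (induction xs)
  case Nil
  then show ?case by (simp add: power_sum_def pre2_mset_def)
next
  case (Cons x xs)
  have "power_sum k (image_mset ((*) x) (mset xs)) = x ^ k * power_sum k (mset xs)"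
    by (simp add: power_sum_def power_mult_distrib sum_mset_distrib_left
        image_mset.compositionality comp_def)
  then have "power_sum k (pre2_mset (x # xs)) = x ^ k * power_sum k (mset xs) + power_sum k (pre2_mset xs)"
    by (simp add: pre2_mset_Cons power_sum_def)
  moreover have "power_sum j (mset (x # xs)) = x ^ j + power_sum j (mset xs)" for j
    by (simp add: power_sum_def)
  moreover have "x ^ (2 * k) = (x ^ k) ^ 2"
    by (simp add: power_mult mult.commute)
  ultimately show ?case
    using Cons.IH by (simp add: power2_eq_square algebra_simps)
qed

lemma power_sum_pow2_eq_if_pre2_mset_eq:
  assumes "sum_list xs = sum_list ys" and "pre2_mset xs = pre2_mset ys"
  shows "power_sum (2 ^ m) (mset xs) = power_sum (2 ^ m) (mset ys)"
proof (induction m)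
  case 0
  then show ?case
    using assms(1) by (simp add: power_sum_def sum_mset_sum_list)
next
  case (Suc m)
  then show ?case
    using power_sum_square[of "2 ^ m" xs] power_sum_square[of "2 ^ m" ys] assms(2) by simp
qed

lemma bernoulli_inequality_nat: "(b::nat) ^ N * (b + N) \<le> (b + 1) ^ N * b"
proof (induction N)
  case 0
  then show ?case by simp
next
  case (Suc N)
  have "b ^ Suc N * (b + Suc N) \<le> (b + 1) * (b ^ N * (b + N))"
    by (simp add: algebra_simps)
  also have "\<dots> \<le> (b + 1) * ((b + 1) ^ N * b)"
    using Suc.IH by (rule mult_left_mono) simp
  finally show ?case by (simp add: algebra_simps)
qed

lemma ex_power_gt_mult_pred_power:
  fixes a c :: nat
  assumes "0 < a" and "infinite K"
  shows "\<exists>k\<in>K. c * (a - 1) ^ k < a ^ k"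
proof -
  define b where "b = a - 1"
  have a_eq: "a = b + 1"
    using assms(1) by (simp add: b_def)
  obtain k where "k \<in> K" and k_gt: "c * b < k"
    using assms(2) by (metis infinite_nat_iff_unbounded)
  have "c * b ^ k < (b + 1) ^ k"
  proof (cases "b = 0")
    case True
    then show ?thesis
      using k_gt by simp
  next
    case False
    have "c * b ^ k * b = b ^ k * (c * b)"
      by (simp add: algebra_simps)
    also have "\<dots> < b ^ k * (b + k)"
      using k_gt False by (intro mult_strict_left_mono) auto
    also have "\<dots> \<le> (b + 1) ^ k * b"
      by (rule bernoulli_inequality_nat)
    finally show ?thesis
      using mult_less_cancel2 by blast
  qed
  then show ?thesis
    using \<open>k \<in> K\<close> by (auto simp: a_eq)
qed

lemma mset_split_count: "A = filter_mset (\<lambda>x. x \<noteq> a) A + replicate_mset (count A a) a"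
  using multiset_partition[of A "\<lambda>x. x \<noteq> a"] by (simp only: not_not filter_eq_replicate_mset)

lemma power_sum_split_count:
  "power_sum k A = power_sum k (filter_mset (\<lambda>x. x \<noteq> a) A) + count A a * a ^ k"
  by (subst mset_split_count[of A a]) (simp add: power_sum_def)

lemma power_sum_less_if_count_less:
  assumes "\<forall>x\<in>#B. x \<le> a" and "count B a < count A a" and "0 < a" and "infinite K"
  shows "\<exists>k\<in>K. power_sum k B < power_sum k A"
proof -
  define B' where "B' = filter_mset (\<lambda>x. x \<noteq> a) B"
  obtain k where "k \<in> K" and k: "size B' * (a - 1) ^ k < a ^ k"
    using ex_power_gt_mult_pred_power assms(3,4) by blast
  have "power_sum k B' \<le> (\<Sum>x\<in>#B'. (a - 1) ^ k)"
    unfolding power_sum_def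
    by (rule sum_mset_mono) (use assms(1) in \<open>auto simp: B'_def intro!: power_mono\<close>)
  also have "\<dots> < a ^ k"
    using k by (simp add: sum_mset_constant)
  finally have "power_sum k B < (count B a + 1) * a ^ k"
    using power_sum_split_count[of k B a] by (simp add: B'_def)
  also have "\<dots> \<le> count A a * a ^ k"
    using assms(2) by (intro mult_right_mono) auto
  also have "\<dots> \<le> power_sum k A"
    using power_sum_split_count[of k A a] by simp
  finally show ?thesis
    using \<open>k \<in> K\<close> by blast
qed

lemma count_eq_if_power_sums_eq:
  assumes "\<forall>x\<in>#A + B. x \<le> a" and "0 < a" and "infinite K"
    and "\<forall>k\<in>K. power_sum k A = power_sum k B"
  shows "count A a = count B a"
proof -
  have "\<not> count C a < count D a" if CD: "C \<in> {A, B}" "D \<in> {A, B}" for C D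
  proof
    assume "count C a < count D a"
    then obtain k where "k \<in> K" "power_sum k C < power_sum k D"
      using power_sum_less_if_count_less[of C a D K] CD assms(1-3) by auto
    then show False
      using CD assms(4) by auto
  qed
  then show ?thesis
    by (meson insertCI linorder_neqE_nat)
qed

lemma power_sums_determine_mset:
  fixes A B :: "nat multiset"
  assumes "0 \<notin># A" and "0 \<notin># B" and "infinite K"
    and "\<forall>k\<in>K. power_sum k A = power_sum k B"
  shows "A = B"
  using assms(1,2,4)
proof (induction "size A + size B" arbitrary: A B rule: less_induct)
  case less
  show ?case
  proof (cases "A + B = {#}")
    case True
    then show ?thesis by simp
  next
    case False
    define a where "a = Max (set_mset (A + B))"
    have "a \<in># A + B"
      using False by (metis a_def Max_in finite_set_mset set_mset_eq_empty_iff)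
    then have "0 < a"
      using less.prems(1,2) by (metis gr0I union_iff)
    have count_eq: "count A a = count B a"
      using count_eq_if_power_sums_eq \<open>0 < a\<close> assms(3) less.prems(3)
      by (auto simp: a_def)
    define A' where "A' = filter_mset (\<lambda>x. x \<noteq> a) A"
    define B' where "B' = filter_mset (\<lambda>x. x \<noteq> a) B"
    have split_A: "A = A' + replicate_mset (count A a) a"
      and split_B: "B = B' + replicate_mset (count B a) a"
      unfolding A'_def B'_def by (rule mset_split_count)+
    have "0 < count A a" "0 < count B a"
      using \<open>a \<in># A + B\<close> count_eq by (metis count_greater_zero_iff union_iff)+
    moreover have "size A = size A' + count A a" "size B = size B' + count B a"
      using arg_cong[OF split_A, of size] arg_cong[OF split_B, of size] by simp_all
    ultimately have "size A' + size B' < size A + size B"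
      by linarith
    moreover have "\<forall>k\<in>K. power_sum k A' = power_sum k B'"
      using less.prems(3) power_sum_split_count[of _ A a] power_sum_split_count[of _ B a] count_eq
      by (simp add: A'_def B'_def)
    moreover have "0 \<notin># A'" "0 \<notin># B'"
      using less.prems(1,2) by (simp_all add: A'_def B'_def)
    ultimately have "A' = B'"
      by (intro less.hyps)
    then show ?thesis
      using split_A split_B count_eq by metis
  qed
qed

theorem theorem1:
  fixes n :: nat and lam mu :: "nat list"
  assumes "0 < n" and "is_partition n lam" and "is_partition n mu"
  shows "pre2 lam = pre2 mu \<longleftrightarrow> lam = mu"
proof
  assume "pre2 lam = pre2 mu"
  then have "power_sum (2 ^ m) (mset lam) = power_sum (2 ^ m) (mset mu)" for m
    using assms(2,3) power_sum_pow2_eq_if_pre2_mset_eq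
    by (simp add: is_partition_def pre2_eq_iff_pre2_mset_eq)
  moreover have "infinite (range (\<lambda>m::nat. 2 ^ m :: nat))"
    by (rule range_inj_infinite) (simp add: inj_def)
  ultimately have "mset lam = mset mu"
    using assms(2,3) by (intro power_sums_determine_mset) (auto simp: is_partition_def)
  then show "lam = mu"
    using assms(2,3) sorted_wrt_ge_eq_if_mset_eq by (auto simp: is_partition_def)
qed simp

end
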